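(* If $G$ is a connected graph with at least one edge, with girth at least five and with no vertices of degree one, then $KB_e(G)\cong G$.
   Context: All graphs are finite, simple and undirected. The girth of a graph is the length of a shortest cycle (infinite if acyclic). A biclique of a graph $G$ is a maximal (with respect to inclusion) induced subgraph of $G$ that is a complete bipartite graph $K_{p,q}$ with $p,q\ge 1$. The edge-biclique graph $KB_e(G)$ is the graph with one vertex for each biclique of $G$, in which two distinct vertices are adjacent if and only if the corresponding bicliques have at least one edge in common. *)

theory Defs
  imports Main "HOL-Library.Extended_Nat"
begin

definition simple_graph :: "'a set \<Rightarrow> 'a set set \<Rightarrow> bool" where
  "simple_graph V E \<longleftrightarrow> finite V \<and>
     (\<forall>e\<in>E. \<exists>u v. e = {u, v} \<and> u \<noteq> v \<and> u \<in> V \<and> v \<in> V)"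

definition adj :: "'a set set \<Rightarrow> 'a \<Rightarrow> 'a \<Rightarrow> bool" where
  "adj E u v \<longleftrightarrow> {u, v} \<in> E"

definition degree :: "'a set \<Rightarrow> 'a set set \<Rightarrow> 'a \<Rightarrow> nat" where
  "degree V E v = card {u \<in> V. adj E u v}"

definition connected_graph :: "'a set \<Rightarrow> 'a set set \<Rightarrow> bool" where
  "connected_graph V E \<longleftrightarrow>
     (\<forall>u\<in>V. \<forall>v\<in>V. (\<lambda>x y. x \<in> V \<and> y \<in> V \<and> adj E x y)\<^sup>*\<^sup>* u v)"

definition has_cycle_of_length :: "'a set \<Rightarrow> 'a set set \<Rightarrow> nat \<Rightarrow> bool" where
  "has_cycle_of_length V E k \<longleftrightarrow> 3 \<le> k \<and>
     (\<exists>vs. length vs = k \<and> distinct vs \<and> set vs \<subseteq> V \<and>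
        (\<forall>i. Suc i < k \<longrightarrow> adj E (vs ! i) (vs ! Suc i)) \<and>
        adj E (vs ! (k - 1)) (vs ! 0))"

definition girth :: "'a set \<Rightarrow> 'a set set \<Rightarrow> enat" where
  "girth V E = (INF k \<in> {k. has_cycle_of_length V E k}. enat k)"

definition induces_complete_bipartite :: "'a set \<Rightarrow> 'a set set \<Rightarrow> 'a set \<Rightarrow> bool" where
  "induces_complete_bipartite V E S \<longleftrightarrow> S \<subseteq> V \<and>
     (\<exists>X Y. S = X \<union> Y \<and> X \<inter> Y = {} \<and> X \<noteq> {} \<and> Y \<noteq> {} \<and>
        (\<forall>u\<in>S. \<forall>v\<in>S. adj E u v \<longleftrightarrow> (u \<in> X \<and> v \<in> Y) \<or> (u \<in> Y \<and> v \<in> X)))"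

text \<open>A biclique (identified with its vertex set): a maximal (w.r.t. inclusion) induced
  complete bipartite subgraph.\<close>
definition biclique :: "'a set \<Rightarrow> 'a set set \<Rightarrow> 'a set \<Rightarrow> bool" where
  "biclique V E S \<longleftrightarrow> induces_complete_bipartite V E S \<and>
     (\<forall>T. induces_complete_bipartite V E T \<and> S \<subseteq> T \<longrightarrow> T = S)"

definition induced_edges :: "'a set set \<Rightarrow> 'a set \<Rightarrow> 'a set set" where
  "induced_edges E S = {e \<in> E. e \<subseteq> S}"

definition KBe_vertices :: "'a set \<Rightarrow> 'a set set \<Rightarrow> 'a set set" where
  "KBe_vertices V E = {S. biclique V E S}"

definition KBe_edges :: "'a set \<Rightarrow> 'a set set \<Rightarrow> 'a set set set" where
  "KBe_edges V E = {{B1, B2} | B1 B2. biclique V E B1 \<and> biclique V E B2 \<and> B1 \<noteq> B2 \<and>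
      induced_edges E B1 \<inter> induced_edges E B2 \<noteq> {}}"

definition graph_iso :: "'a set \<Rightarrow> 'a set set \<Rightarrow> 'b set \<Rightarrow> 'b set set \<Rightarrow> bool" where
  "graph_iso V1 E1 V2 E2 \<longleftrightarrow>
     (\<exists>f. bij_betw f V1 V2 \<and> (\<forall>u\<in>V1. \<forall>v\<in>V1. {u, v} \<in> E1 \<longleftrightarrow> {f u, f v} \<in> E2))"

end

theory Submission
  imports Defs
begin

text \<open>Girth at least five means there are no triangles and no 4-cycles. Without 4-cycles every
  induced complete bipartite subgraph is a star, i.e. lies in a closed neighbourhood N[v];
  without triangles N[v] itself induces a star, and it is a maximal one as soon as v has two
  neighbours, which connectivity and the absence of leaves guarantee. So the bicliques are
  exactly the sets N[v], the map v \<mapsto> N[v] is injective, and the only edge that two of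
  them can share is the edge joining their centres.\<close>

definition triangle_free :: "'a set set \<Rightarrow> bool" where
  "triangle_free E \<longleftrightarrow> \<not> (\<exists>a b c. adj E a b \<and> adj E b c \<and> adj E c a)"

definition C4_free :: "'a set set \<Rightarrow> bool" where
  "C4_free E \<longleftrightarrow>
     \<not> (\<exists>a b c d. adj E a b \<and> adj E b c \<and> adj E c d \<and> adj E d a \<and> a \<noteq> c \<and> b \<noteq> d)"

definition closed_nbhd :: "'a set set \<Rightarrow> 'a \<Rightarrow> 'a set" where
  "closed_nbhd E v = insert v {u. adj E v u}"

lemma adj_commute: "adj E u v \<longleftrightarrow> adj E v u"
  unfolding adj_def by (simp add: insert_commute)

lemma adjD:
  assumes "simple_graph V E" "adj E u v"
  shows "u \<in> V" "v \<in> V" "u \<noteq> v"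
  using assms unfolding adj_def simple_graph_def by (metis doubleton_eq_iff)+

lemma girth_le_cycle_length: "has_cycle_of_length V E k \<Longrightarrow> girth V E \<le> enat k"
  unfolding girth_def by (rule INF_lower) simp

lemma cycle_length_ge_girth:
  assumes "has_cycle_of_length V E k" "enat n \<le> girth V E"
  shows "n \<le> k"
proof -
  have "enat n \<le> enat k" using assms(2) girth_le_cycle_length[OF assms(1)] by (rule order_trans)
  then show ?thesis by simp
qed

lemma girth_ge_5_imp_triangle_free:
  assumes "simple_graph V E" "girth V E \<ge> 5"
  shows "triangle_free E"
  unfolding triangle_free_def
proof
  assume "\<exists>a b c. adj E a b \<and> adj E b c \<and> adj E c a"
  then obtain a b c where abc: "adj E a b" "adj E b c" "adj E c a" by blast
  have "distinct [a, b, c]" "{a, b, c} \<subseteq> V"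
    using adjD[OF assms(1) abc(1)] adjD[OF assms(1) abc(2)] adjD[OF assms(1) abc(3)] by auto
  with abc have "has_cycle_of_length V E 3"
    unfolding has_cycle_of_length_def
    by (intro conjI exI[of _ "[a, b, c]"]) (auto simp: less_Suc_eq numeral_eq_Suc)
  moreover have "enat 5 \<le> girth V E" using assms(2) by (simp add: numeral_eq_enat)
  ultimately show False using cycle_length_ge_girth by fastforce
qed

lemma girth_ge_5_imp_C4_free:
  assumes "simple_graph V E" "girth V E \<ge> 5"
  shows "C4_free E"
  unfolding C4_free_def
proof
  assume "\<exists>a b c d. adj E a b \<and> adj E b c \<and> adj E c d \<and> adj E d a \<and> a \<noteq> c \<and> b \<noteq> d"
  then obtain a b c d where abcd: "adj E a b" "adj E b c" "adj E c d" "adj E d a" "a \<noteq> c" "b \<noteq> d"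
    by blast
  have "distinct [a, b, c, d]" "{a, b, c, d} \<subseteq> V"
    using adjD[OF assms(1) abcd(1)] adjD[OF assms(1) abcd(2)] adjD[OF assms(1) abcd(3)]
      adjD[OF assms(1) abcd(4)] abcd(5,6) by auto
  with abcd have "has_cycle_of_length V E 4"
    unfolding has_cycle_of_length_def
    by (intro conjI exI[of _ "[a, b, c, d]"]) (auto simp: less_Suc_eq numeral_eq_Suc)
  moreover have "enat 5 \<le> girth V E" using assms(2) by (simp add: numeral_eq_enat)
  ultimately show False using cycle_length_ge_girth by fastforce
qed

lemma connected_graph_has_neighbour:
  assumes "simple_graph V E" "connected_graph V E" "E \<noteq> {}" "v \<in> V"
  shows "\<exists>u. adj E v u"
proof -
  obtain e where "e \<in> E" using assms(3) by blast
  then obtain p q where "e = {p, q}" "p \<in> V" using assms(1) unfolding simple_graph_def by blast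
  with \<open>e \<in> E\<close> have "{p, q} \<in> E" by simp
  show ?thesis
  proof (cases "v = p")
    case True
    with \<open>{p, q} \<in> E\<close> show ?thesis unfolding adj_def by blast
  next
    case False
    have "(\<lambda>x y. x \<in> V \<and> y \<in> V \<and> adj E x y)\<^sup>*\<^sup>* v p"
      using assms(2,4) \<open>p \<in> V\<close> unfolding connected_graph_def by simp
    then show ?thesis using False by (cases rule: converse_rtranclpE) auto
  qed
qed

lemma two_neighbours_if_degree_ne_1:
  assumes "simple_graph V E" "connected_graph V E" "E \<noteq> {}" "v \<in> V" "degree V E v \<noteq> 1"
  shows "\<exists>a b. a \<noteq> b \<and> adj E v a \<and> adj E v b"
proof -
  obtain a where a: "adj E v a" using connected_graph_has_neighbour[OF assms(1-4)] by blast
  let ?N = "{u \<in> V. adj E u v}"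
  have "a \<in> ?N" using a adjD(2)[OF assms(1) a] adj_commute[of E v a] by blast
  moreover have "?N \<noteq> {a}" using assms(5) unfolding degree_def by auto
  ultimately obtain b where "b \<in> ?N" "b \<noteq> a" by blast
  with a show ?thesis using adj_commute[of E b v] by blast
qed

lemma complete_bipartite_subset_closed_nbhd:
  assumes "C4_free E" "induces_complete_bipartite V E T"
  shows "\<exists>v\<in>T. T \<subseteq> closed_nbhd E v"
proof -
  obtain X Y where T: "T = X \<union> Y" "X \<inter> Y = {}" "X \<noteq> {}" "Y \<noteq> {}"
    and adj_T: "\<forall>u\<in>T. \<forall>w\<in>T. adj E u w \<longleftrightarrow> u \<in> X \<and> w \<in> Y \<or> u \<in> Y \<and> w \<in> X"
    using assms(2) unfolding induces_complete_bipartite_def by metis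
  have adj_across: "adj E u w" if "u \<in> X" "w \<in> Y" for u w
    using that adj_T T(1) by blast
  have star: "T \<subseteq> closed_nbhd E v" if "\<forall>w\<in>T - {v}. adj E v w" for v
    using that unfolding closed_nbhd_def by blast
  obtain x y where "x \<in> X" "y \<in> Y" using T by blast
  show ?thesis
  proof (cases "X = {x}")
    case True
    then have "\<forall>w\<in>T - {x}. adj E x w" using T(1) adj_across \<open>x \<in> X\<close> by blast
    with \<open>x \<in> X\<close> T(1) star show ?thesis by blast
  next
    case False
    then obtain x' where "x' \<in> X" "x' \<noteq> x" using \<open>x \<in> X\<close> by blast
    have "adj E y w" if w: "w \<in> T - {y}" for w
    proof (cases "w \<in> X")
      case True
      with \<open>y \<in> Y\<close> adj_across adj_commute show ?thesis by metis
    next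
      case False
      with w T(1) have "w \<in> Y" "w \<noteq> y" by blast+
      \<comment> \<open>a second vertex w of Y closes the 4-cycle x y x' w\<close>
      then have "adj E x y" "adj E y x'" "adj E x' w" "adj E w x"
        using \<open>x \<in> X\<close> \<open>x' \<in> X\<close> \<open>y \<in> Y\<close> adj_across adj_commute by metis+
      with assms(1) \<open>x' \<noteq> x\<close> \<open>w \<noteq> y\<close> show ?thesis unfolding C4_free_def by blast
    qed
    with \<open>y \<in> Y\<close> T(1) star show ?thesis by blast
  qed
qed

locale triangle_C4_free_graph =
  fixes V :: "'a set" and E :: "'a set set"
  assumes simple: "simple_graph V E"
    and triangle_free: "triangle_free E"
    and C4_free: "C4_free E"
begin

lemma no_triangle: "adj E a b \<Longrightarrow> adj E b c \<Longrightarrow> adj E c a \<Longrightarrow> False"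
  using triangle_free unfolding triangle_free_def by blast

lemma adj_in_closed_nbhd_iff:
  assumes "u \<in> closed_nbhd E v" "w \<in> closed_nbhd E v"
  shows "adj E u w \<longleftrightarrow> u = v \<and> adj E v w \<or> adj E v u \<and> w = v"
proof (cases "u = v")
  case True
  then show ?thesis using adjD(3)[OF simple, of v v] by auto
next
  case False
  with assms(1) have "adj E v u" unfolding closed_nbhd_def by simp
  show ?thesis
  proof (cases "w = v")
    case True
    with False \<open>adj E v u\<close> show ?thesis by (simp add: adj_commute)
  next
    case False
    with assms(2) have "adj E w v" unfolding closed_nbhd_def by (simp add: adj_commute)
    with \<open>adj E v u\<close> \<open>u \<noteq> v\<close> False show ?thesis using no_triangle[of v u w] by blast
  qed
qed

lemma closed_nbhd_induces_complete_bipartite: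
  assumes "v \<in> V" "adj E v a"
  shows "induces_complete_bipartite V E (closed_nbhd E v)"
  unfolding induces_complete_bipartite_def
proof
  show "closed_nbhd E v \<subseteq> V"
    using assms(1) adjD(2)[OF simple] unfolding closed_nbhd_def by blast
  show "\<exists>X Y. closed_nbhd E v = X \<union> Y \<and> X \<inter> Y = {} \<and> X \<noteq> {} \<and> Y \<noteq> {} \<and>
    (\<forall>u\<in>closed_nbhd E v. \<forall>w\<in>closed_nbhd E v. adj E u w \<longleftrightarrow> u \<in> X \<and> w \<in> Y \<or> u \<in> Y \<and> w \<in> X)"
  proof (rule exI[of _ "{v}"], rule exI[of _ "{u. adj E v u}"], intro conjI ballI)
    show "closed_nbhd E v = {v} \<union> {u. adj E v u}" unfolding closed_nbhd_def by blast
    show "{v} \<inter> {u. adj E v u} = {}" using adjD(3)[OF simple] by blast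
    show "{v} \<noteq> {}" by simp
    show "{u. adj E v u} \<noteq> {}" using assms(2) by blast
    fix u w assume "u \<in> closed_nbhd E v" "w \<in> closed_nbhd E v"
    then show "adj E u w \<longleftrightarrow>
        u \<in> {v} \<and> w \<in> {u. adj E v u} \<or> u \<in> {u. adj E v u} \<and> w \<in> {v}"
      by (simp add: adj_in_closed_nbhd_iff)
  qed
qed

lemma biclique_closed_nbhd:
  assumes "v \<in> V" "a \<noteq> b" "adj E v a" "adj E v b"
  shows "biclique V E (closed_nbhd E v)"
  unfolding biclique_def
proof (intro conjI allI impI closed_nbhd_induces_complete_bipartite[OF assms(1,3)])
  fix T assume T: "induces_complete_bipartite V E T \<and> closed_nbhd E v \<subseteq> T"
  then obtain w where "w \<in> T" and T_w: "T \<subseteq> closed_nbhd E w"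
    using complete_bipartite_subset_closed_nbhd[OF C4_free] by blast
  have "w = v"
  proof (rule ccontr)
    assume "w \<noteq> v"
    obtain c where "c \<in> {a, b}" "c \<noteq> w" using assms(2) by blast
    then have "v \<in> closed_nbhd E w" "c \<in> closed_nbhd E w"
      using T T_w assms(3,4) unfolding closed_nbhd_def by auto
    with \<open>w \<noteq> v\<close> \<open>c \<noteq> w\<close> have "adj E w v" "adj E c w"
      unfolding closed_nbhd_def by (auto simp: adj_commute)
    moreover have "adj E v c" using \<open>c \<in> {a, b}\<close> assms(3,4) by blast
    ultimately show False using no_triangle by blast
  qed
  with T_w have "T \<subseteq> closed_nbhd E v" by simp
  with T show "T = closed_nbhd E v" by (meson subset_antisym)
qed

lemma biclique_eq_closed_nbhd:
  assumes "biclique V E S"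
  shows "\<exists>v\<in>V. S = closed_nbhd E v"
proof -
  have cb: "induces_complete_bipartite V E S" using assms unfolding biclique_def by blast
  then obtain v where "v \<in> S" and S_v: "S \<subseteq> closed_nbhd E v"
    using complete_bipartite_subset_closed_nbhd[OF C4_free] by blast
  have "v \<in> V" using cb \<open>v \<in> S\<close> unfolding induces_complete_bipartite_def by blast
  obtain u where "u \<in> S" "u \<noteq> v"
    using cb unfolding induces_complete_bipartite_def by blast
  with S_v have "adj E v u" unfolding closed_nbhd_def by blast
  with \<open>v \<in> V\<close> have "induces_complete_bipartite V E (closed_nbhd E v)"
    by (rule closed_nbhd_induces_complete_bipartite)
  with assms S_v have "closed_nbhd E v = S" unfolding biclique_def by blast
  with \<open>v \<in> V\<close> show ?thesis by blast
qed

lemma inj_on_closed_nbhd: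
  assumes "\<forall>v\<in>V. \<exists>a b. a \<noteq> b \<and> adj E v a \<and> adj E v b"
  shows "inj_on (closed_nbhd E) V"
proof
  fix v w assume "v \<in> V" "w \<in> V" and eq: "closed_nbhd E v = closed_nbhd E w"
  show "v = w"
  proof (rule ccontr)
    assume "v \<noteq> w"
    have in_w: "u \<in> closed_nbhd E w" if "u = v \<or> adj E v u" for u
      using that eq[symmetric] unfolding closed_nbhd_def by blast
    obtain c where "adj E v c" "c \<noteq> w" using assms \<open>v \<in> V\<close> by blast
    with in_w \<open>v \<noteq> w\<close> have "adj E w v" "adj E w c" unfolding closed_nbhd_def by auto
    with \<open>adj E v c\<close> show False using no_triangle[of v c w] adj_commute[of E w c] by blast
  qed
qed

lemma centre_mem_edge_subset_closed_nbhd: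
  assumes "e \<in> E" "e \<subseteq> closed_nbhd E v"
  shows "v \<in> e"
proof -
  obtain p q where e: "e = {p, q}" using assms(1) simple unfolding simple_graph_def by blast
  show ?thesis
  proof (rule ccontr)
    assume "v \<notin> e"
    with assms(2) e have "adj E v p" "adj E q v"
      unfolding closed_nbhd_def by (auto simp: adj_commute)
    moreover have "adj E p q" using assms(1) e unfolding adj_def by simp
    ultimately show False using no_triangle by blast
  qed
qed

lemma closed_nbhds_share_edge_iff:
  assumes "v \<noteq> w"
  shows "induced_edges E (closed_nbhd E v) \<inter> induced_edges E (closed_nbhd E w) \<noteq> {}
    \<longleftrightarrow> {v, w} \<in> E"
proof
  assume "induced_edges E (closed_nbhd E v) \<inter> induced_edges E (closed_nbhd E w) \<noteq> {}"
  then obtain e where "e \<in> E" "e \<subseteq> closed_nbhd E v" "e \<subseteq> closed_nbhd E w"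
    unfolding induced_edges_def by blast
  then have "v \<in> e" "w \<in> e" using centre_mem_edge_subset_closed_nbhd by blast+
  moreover obtain p q where "e = {p, q}" using \<open>e \<in> E\<close> simple unfolding simple_graph_def by blast
  ultimately have "e = {v, w}" using assms by blast
  with \<open>e \<in> E\<close> show "{v, w} \<in> E" by simp
next
  assume "{v, w} \<in> E"
  then have "adj E v w" "adj E w v" unfolding adj_def by (simp_all add: insert_commute)
  with \<open>{v, w} \<in> E\<close>
  have "{v, w} \<in> induced_edges E (closed_nbhd E v) \<inter> induced_edges E (closed_nbhd E w)"
    unfolding induced_edges_def closed_nbhd_def by auto
  then show "induced_edges E (closed_nbhd E v) \<inter> induced_edges E (closed_nbhd E w) \<noteq> {}"
    by blast
qed

context
  assumes two_neighbours: "\<forall>v\<in>V. \<exists>a b. a \<noteq> b \<and> adj E v a \<and> adj E v b"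
begin

lemma KBe_vertices_eq_closed_nbhds: "KBe_vertices V E = closed_nbhd E ` V"
proof (intro set_eqI iffI)
  fix S assume "S \<in> KBe_vertices V E"
  then show "S \<in> closed_nbhd E ` V"
    unfolding KBe_vertices_def using biclique_eq_closed_nbhd by blast
next
  fix S assume "S \<in> closed_nbhd E ` V"
  then obtain v a b where "S = closed_nbhd E v" "v \<in> V" "a \<noteq> b" "adj E v a" "adj E v b"
    using two_neighbours by blast
  then show "S \<in> KBe_vertices V E"
    unfolding KBe_vertices_def using biclique_closed_nbhd by simp
qed

lemma KBe_edges_closed_nbhd_iff:
  assumes "v \<in> V" "w \<in> V"
  shows "{closed_nbhd E v, closed_nbhd E w} \<in> KBe_edges V E \<longleftrightarrow> {v, w} \<in> E"
proof -
  have inj: "closed_nbhd E v = closed_nbhd E w \<longleftrightarrow> v = w"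
    using inj_on_closed_nbhd[OF two_neighbours] assms by (auto dest: inj_onD)
  have "biclique V E (closed_nbhd E v)" "biclique V E (closed_nbhd E w)"
    using biclique_closed_nbhd two_neighbours assms by blast+
  then have "{closed_nbhd E v, closed_nbhd E w} \<in> KBe_edges V E \<longleftrightarrow> v \<noteq> w \<and>
      induced_edges E (closed_nbhd E v) \<inter> induced_edges E (closed_nbhd E w) \<noteq> {}"
    unfolding KBe_edges_def using inj by (auto simp: doubleton_eq_iff Int_commute)
  also have "\<dots> \<longleftrightarrow> {v, w} \<in> E"
    using closed_nbhds_share_edge_iff adjD(3)[OF simple] unfolding adj_def by blast
  finally show ?thesis .
qed

end

end

lemma graph_iso_image_inverse:
  assumes "inj_on f V" "\<And>u v. u \<in> V \<Longrightarrow> v \<in> V \<Longrightarrow> {f u, f v} \<in> E' \<longleftrightarrow> {u, v} \<in> E"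
  shows "graph_iso (f ` V) E' V E"
  unfolding graph_iso_def
proof (intro exI conjI ballI)
  show "bij_betw (inv_into V f) (f ` V) V"
    by (rule bij_betw_inv_into[OF inj_on_imp_bij_betw[OF assms(1)]])
next
  fix x y assume "x \<in> f ` V" "y \<in> f ` V"
  then obtain u v where "u \<in> V" "v \<in> V" "x = f u" "y = f v" by blast
  with assms show "{x, y} \<in> E' \<longleftrightarrow> {inv_into V f x, inv_into V f y} \<in> E"
    by (simp add: inv_into_f_f)
qed

theorem mainTheorem6:
  fixes V :: "'a set" and E :: "'a set set"
  assumes "simple_graph V E"
    and "connected_graph V E"
    and "E \<noteq> {}"
    and "girth V E \<ge> 5"
    and "\<forall>v\<in>V. degree V E v \<noteq> 1"
  shows "graph_iso (KBe_vertices V E) (KBe_edges V E) V E"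
proof -
  interpret triangle_C4_free_graph V E
    using assms(1,4) girth_ge_5_imp_triangle_free girth_ge_5_imp_C4_free
    by unfold_locales blast+
  have two_neighbours: "\<forall>v\<in>V. \<exists>a b. a \<noteq> b \<and> adj E v a \<and> adj E v b"
    using two_neighbours_if_degree_ne_1[OF assms(1-3)] assms(5) by blast
  show ?thesis
    unfolding KBe_vertices_eq_closed_nbhds[OF two_neighbours]
    by (rule graph_iso_image_inverse[OF inj_on_closed_nbhd[OF two_neighbours]])
      (rule KBe_edges_closed_nbhd_iff[OF two_neighbours])
qed

end
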